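(* Let $\xi,M_0,c_*,c^*$ be positive constants, $\lambda_1=M_0\sqrt{(\log p)/n}$, and let $\hat\Sigma$ be the $p\times p$ matrix with entries $(x_j^Tx_k/n)I\{|x_j^Tx_k/n|\ge\lambda_1\}$. Suppose $\phi_{\min}(\hat\Sigma)\ge c_*$ and $s\lambda_1(1+\xi)^2\le c_*/2$. Then $\kappa^2(\xi,S)\ge c_*/2$ for all nonempty $S$ with $|S|\le s$. Let $K=2\xi^2(c^*/c_*+1/2)$. If in addition $\phi_{\max}(\hat\Sigma)\le c^*$ and $s\lambda_1(1+K)+\lambda_1\le c_*/2$, then for every nonempty $S$ with $|S|\le s$ and the integer $m$ with $m-1<K|S|\le m$, one has $\phi_-(m,S)\ge c_*/2$, $\kappa^2(\xi,S)\ge c_*/2$ and $\xi^2/\kappa^2(\xi,S)\le K/\phi_+(m,S)$.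
   Context: $X=(x_1,\dots,x_p)\in\mathbb{R}^{n\times p}$ is a deterministic matrix with $\|x_j\|_2^2=n$ for all $j$; $s>0$. For $\xi\ge1$ and nonempty $S\subseteq\{1,\dots,p\}$, the cone $\mathcal C(\xi,S)=\{u\in\mathbb{R}^p:\|u_{S^c}\|_1\le\xi\|u_S\|_1\}$ and the compatibility factor $\kappa(\xi,S)=\inf\{\|Xu\|_2|S|^{1/2}/(n^{1/2}\|u_S\|_1):0\ne u\in\mathcal C(\xi,S)\}$. For positive integers $m$, sparse eigenvalues $\phi_-(m,S)=\min_{B\supseteq S,|B\setminus S|\le m}\phi_{\min}(X_B^TX_B/n)$ and $\phi_+(m,S)=\max_{B\cap S=\emptyset,|B|\le m}\phi_{\max}(X_B^TX_B/n)$, where $X_B$ is the submatrix of columns indexed by $B$ and $\phi_{\min},\phi_{\max}$ denote smallest and largest eigenvalues. *)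

theory Defs
  imports "HOL-Analysis.Analysis"
begin

text \<open>Conventions: the design matrix X has rows 0..<n and columns 0..<p, represented
  as a function nat => nat => real. Vectors in R^p are functions nat => real
  supported on {0..<p}. Square matrices are functions nat => nat => real, and
  submatrices are obtained by restricting the indices to a set B.\<close>

definition gram :: "nat \<Rightarrow> (nat \<Rightarrow> nat \<Rightarrow> real) \<Rightarrow> nat \<Rightarrow> nat \<Rightarrow> real" where
  "gram n X j k = (\<Sum>i<n. X i j * X i k) / real n"

definition is_eig :: "(nat \<Rightarrow> nat \<Rightarrow> real) \<Rightarrow> nat set \<Rightarrow> real \<Rightarrow> bool" where
  "is_eig A B e \<longleftrightarrow> (\<exists>v. (\<forall>j. j \<notin> B \<longrightarrow> v j = 0) \<and> (\<exists>j\<in>B. v j \<noteq> 0) \<and>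
      (\<forall>j\<in>B. (\<Sum>k\<in>B. A j k * v k) = e * v j))"

definition phi_min :: "(nat \<Rightarrow> nat \<Rightarrow> real) \<Rightarrow> nat set \<Rightarrow> real" where
  "phi_min A B = Min {e. is_eig A B e}"

definition phi_max :: "(nat \<Rightarrow> nat \<Rightarrow> real) \<Rightarrow> nat set \<Rightarrow> real" where
  "phi_max A B = Max {e. is_eig A B e}"

definition l1_on :: "(nat \<Rightarrow> real) \<Rightarrow> nat set \<Rightarrow> real" where
  "l1_on u A = (\<Sum>j\<in>A. \<bar>u j\<bar>)"

definition norm_Xu :: "nat \<Rightarrow> nat \<Rightarrow> (nat \<Rightarrow> nat \<Rightarrow> real) \<Rightarrow> (nat \<Rightarrow> real) \<Rightarrow> real" where
  "norm_Xu n p X u = sqrt (\<Sum>i<n. (\<Sum>j<p. X i j * u j)\<^sup>2)"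

definition cone :: "nat \<Rightarrow> real \<Rightarrow> nat set \<Rightarrow> (nat \<Rightarrow> real) set" where
  "cone p \<xi> S = {u. (\<forall>j. j \<ge> p \<longrightarrow> u j = 0) \<and> l1_on u ({0..<p} - S) \<le> \<xi> * l1_on u S}"

definition compat :: "nat \<Rightarrow> nat \<Rightarrow> (nat \<Rightarrow> nat \<Rightarrow> real) \<Rightarrow> real \<Rightarrow> nat set \<Rightarrow> real" where
  "compat n p X \<xi> S = Inf {norm_Xu n p X u * sqrt (real (card S)) / (sqrt (real n) * l1_on u S)
      | u. u \<in> cone p \<xi> S \<and> u \<noteq> (\<lambda>_. 0)}"

definition phi_minus :: "nat \<Rightarrow> nat \<Rightarrow> (nat \<Rightarrow> nat \<Rightarrow> real) \<Rightarrow> nat \<Rightarrow> nat set \<Rightarrow> real" where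
  "phi_minus n p X m S = Min {phi_min (gram n X) B | B. S \<subseteq> B \<and> B \<subseteq> {0..<p} \<and> card (B - S) \<le> m}"

definition phi_plus :: "nat \<Rightarrow> nat \<Rightarrow> (nat \<Rightarrow> nat \<Rightarrow> real) \<Rightarrow> nat \<Rightarrow> nat set \<Rightarrow> real" where
  "phi_plus n p X m S = Max {phi_max (gram n X) B | B. B \<noteq> {} \<and> B \<subseteq> {0..<p} \<and> B \<inter> S = {} \<and> card B \<le> m}"

definition sigma_hat :: "nat \<Rightarrow> (nat \<Rightarrow> nat \<Rightarrow> real) \<Rightarrow> real \<Rightarrow> nat \<Rightarrow> nat \<Rightarrow> real" where
  "sigma_hat n X lam1 j k = (if \<bar>gram n X j k\<bar> \<ge> lam1 then gram n X j k else 0)"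

end

theory Submission
  imports Defs
begin

(* Hence phi_min A B is the best constant in the
   Rayleigh inequality  l * |x|^2 <= x'Ax,  and dually for phi_max.
   Two consequences drive the proposition: passing to a principal submatrix can only
   raise phi_min and lower phi_max, and an entrywise perturbation of size lam moves
   them by at most lam * card B.  Since gram and sigma_hat differ entrywise by at most
   lam1, the hypotheses on sigma_hat transfer to the sparse eigenvalues of the Gram
   matrix and, via the l1 cone condition, to the compatibility factor. *)

section \<open>Inner products and quadratic forms on an index set\<close>

definition dot_on :: "nat set \<Rightarrow> (nat \<Rightarrow> real) \<Rightarrow> (nat \<Rightarrow> real) \<Rightarrow> real" where
  "dot_on B x y = (\<Sum>j\<in>B. x j * y j)"

definition quad_on :: "(nat \<Rightarrow> nat \<Rightarrow> real) \<Rightarrow> nat set \<Rightarrow> (nat \<Rightarrow> real) \<Rightarrow> real" where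
  "quad_on A B x = (\<Sum>j\<in>B. x j * (\<Sum>k\<in>B. A j k * x k))"

definition symmetric_on :: "nat set \<Rightarrow> (nat \<Rightarrow> nat \<Rightarrow> real) \<Rightarrow> bool" where
  "symmetric_on B A \<longleftrightarrow> (\<forall>j\<in>B. \<forall>k\<in>B. A j k = A k j)"

definition unit_vec :: "nat \<Rightarrow> nat \<Rightarrow> real" where
  "unit_vec j = (\<lambda>k. if k = j then 1 else 0)"

lemma dot_on_nonneg: "0 \<le> dot_on B x x"
  unfolding dot_on_def by (auto intro: sum_nonneg)

lemma dot_on_eq_0_imp:
  assumes "finite B" "dot_on B x x = 0" "j \<in> B" shows "x j = 0"
  using assms unfolding dot_on_def by (simp add: sum_nonneg_eq_0_iff)

lemma dot_on_pos:
  assumes "finite B" "\<exists>j\<in>B. x j \<noteq> 0" shows "0 < dot_on B x x"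
  using dot_on_nonneg[of B x] dot_on_eq_0_imp[OF assms(1), of x] assms(2)
  by (metis order_le_less)

lemma coord_sq_le_dot_on:
  assumes "finite B" "j \<in> B" shows "(x j)\<^sup>2 \<le> dot_on B x x"
  unfolding dot_on_def power2_eq_square
  by (rule member_le_sum[where f = "\<lambda>j. x j * x j"]) (auto simp: assms)

lemma dot_on_unit_vec:
  assumes "finite B" "j \<in> B" shows "dot_on B (unit_vec j) y = y j"
proof -
  have "dot_on B (unit_vec j) y = (\<Sum>i\<in>B. if i = j then y i else 0)"
    unfolding dot_on_def unit_vec_def by (intro sum.cong) auto
  thus ?thesis using assms by simp
qed

lemma quad_on_unit_vec:
  assumes "finite B" "j \<in> B" shows "quad_on A B (unit_vec j) = A j j"
proof -
  have "quad_on A B (unit_vec j) = (\<Sum>k\<in>B. A j k * unit_vec j k)"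
    unfolding quad_on_def by (subst dot_on_def[symmetric], rule dot_on_unit_vec[OF assms])
  also have "\<dots> = dot_on B (unit_vec j) (A j)"
    unfolding dot_on_def by (simp add: mult.commute)
  finally show ?thesis using dot_on_unit_vec[OF assms] by simp
qed

lemma bilinear_swap:
  assumes "symmetric_on B A"
  shows "(\<Sum>j\<in>B. w j * (\<Sum>k\<in>B. A j k * v k)) = (\<Sum>k\<in>B. v k * (\<Sum>j\<in>B. A k j * w j))"
proof -
  have "(\<Sum>j\<in>B. w j * (\<Sum>k\<in>B. A j k * v k)) = (\<Sum>j\<in>B. \<Sum>k\<in>B. w j * A j k * v k)"
    by (simp add: sum_distrib_left mult_ac)
  also have "\<dots> = (\<Sum>k\<in>B. \<Sum>j\<in>B. w j * A j k * v k)" by (rule sum.swap)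
  also have "\<dots> = (\<Sum>k\<in>B. v k * (\<Sum>j\<in>B. A k j * w j))"
    using assms unfolding symmetric_on_def by (auto simp: sum_distrib_left intro!: sum.cong)
  finally show ?thesis .
qed

lemma quad_on_line:
  assumes "symmetric_on B A"
  shows "quad_on A B (\<lambda>i. x i + t * y i)
       = quad_on A B x + 2 * t * (\<Sum>j\<in>B. y j * (\<Sum>k\<in>B. A j k * x k)) + t\<^sup>2 * quad_on A B y"
proof -
  have "quad_on A B (\<lambda>i. x i + t * y i) = quad_on A B x + t * (\<Sum>j\<in>B. x j * (\<Sum>k\<in>B. A j k * y k))
     + t * (\<Sum>j\<in>B. y j * (\<Sum>k\<in>B. A j k * x k)) + t\<^sup>2 * quad_on A B y"
    unfolding quad_on_def
    by (simp add: algebra_simps power2_eq_square sum.distrib sum_distrib_left)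
  thus ?thesis using bilinear_swap[OF assms, of x y] by simp
qed

lemma dot_on_line:
  "dot_on B (\<lambda>i. x i + t * y i) (\<lambda>i. x i + t * y i)
     = dot_on B x x + 2 * t * dot_on B x y + t\<^sup>2 * dot_on B y y"
  unfolding dot_on_def
  by (simp add: algebra_simps power2_eq_square sum.distrib sum_distrib_left)

lemma l1_on_sq_le:
  assumes "finite B"
  shows "(l1_on x B)\<^sup>2 \<le> real (card B) * dot_on B x x"
proof -
  have "(l1_on x B)\<^sup>2 = (\<Sum>j\<in>B. \<Sum>k\<in>B. \<bar>x j\<bar> * \<bar>x k\<bar>)"
    unfolding l1_on_def power2_eq_square by (simp add: sum_product)
  also have "\<dots> \<le> (\<Sum>j\<in>B. \<Sum>k\<in>B. (x j * x j + x k * x k) / 2)"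
  proof (intro sum_mono)
    fix j k
    have "0 \<le> (\<bar>x j\<bar> - \<bar>x k\<bar>)\<^sup>2" by simp
    thus "\<bar>x j\<bar> * \<bar>x k\<bar> \<le> (x j * x j + x k * x k) / 2"
      by (simp add: power2_eq_square algebra_simps abs_mult_self_eq)
  qed
  also have "\<dots> = real (card B) * dot_on B x x"
    unfolding dot_on_def
    by (simp add: sum.distrib sum_divide_distrib[symmetric] sum_distrib_left mult_ac)
  finally show ?thesis .
qed

lemma l1_on_nonneg: "0 \<le> l1_on u A"
  unfolding l1_on_def by (simp add: sum_nonneg)

lemma l1_on_split:
  assumes "finite P" "S \<subseteq> P"
  shows "l1_on u P = l1_on u S + l1_on u (P - S)"
  unfolding l1_on_def using assms by (simp add: sum.subset_diff)

section \<open>Eigenvalues of symmetric matrices\<close>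

lemma bessel_inequality:
  assumes fB: "finite B" and fV: "finite V"
    and orth: "\<forall>v\<in>V. \<forall>w\<in>V. v \<noteq> w \<longrightarrow> dot_on B v w = 0"
    and pos: "\<forall>v\<in>V. 0 < dot_on B v v"
  shows "(\<Sum>v\<in>V. (dot_on B x v)\<^sup>2 / dot_on B v v) \<le> dot_on B x x"
proof -
  define c where "c v = dot_on B x v / dot_on B v v" for v
  define proj where "proj i = (\<Sum>v\<in>V. c v * v i)" for i
  define bessel_sum where "bessel_sum = (\<Sum>v\<in>V. (dot_on B x v)\<^sup>2 / dot_on B v v)"
  have proj_v: "(\<Sum>w\<in>V. c w * dot_on B v w) = c v * dot_on B v v" if "v \<in> V" for v
  proof -
    have "(\<Sum>w\<in>V. c w * dot_on B v w) = (\<Sum>w\<in>V. if w = v then c v * dot_on B v v else 0)"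
      using orth that by (intro sum.cong) auto
    thus ?thesis using fV that by simp
  qed
  have cross: "dot_on B x proj = bessel_sum"
  proof -
    have "dot_on B x proj = (\<Sum>v\<in>V. c v * dot_on B x v)"
      unfolding dot_on_def proj_def
      by (simp add: sum_distrib_left sum.swap[of _ B] mult.assoc mult.left_commute)
    thus ?thesis unfolding bessel_sum_def c_def by (simp add: power2_eq_square)
  qed
  have proj_sq: "dot_on B proj proj = bessel_sum"
  proof -
    have "dot_on B proj proj = (\<Sum>v\<in>V. \<Sum>w\<in>V. \<Sum>i\<in>B. c v * (c w * (v i * w i)))"
      unfolding dot_on_def proj_def
      by (simp add: sum_product mult_ac sum.swap[of _ B])
    also have "\<dots> = (\<Sum>v\<in>V. c v * (\<Sum>w\<in>V. c w * dot_on B v w))"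
      unfolding dot_on_def by (simp add: sum_distrib_left)
    also have "\<dots> = (\<Sum>v\<in>V. c v * (c v * dot_on B v v))"
      using proj_v by (intro sum.cong) auto
    also have "\<dots> = bessel_sum"
      unfolding bessel_sum_def c_def using pos by (intro sum.cong) (auto simp: power2_eq_square)
    finally show ?thesis .
  qed
  have "0 \<le> dot_on B (\<lambda>i. x i + (-1) * proj i) (\<lambda>i. x i + (-1) * proj i)"
    by (rule dot_on_nonneg)
  also have "\<dots> = dot_on B x x - bessel_sum"
    unfolding dot_on_line cross proj_sq by simp
  finally show ?thesis unfolding bessel_sum_def by simp
qed

text \<open>Pairwise orthogonal nonzero vectors on B number at most card B: summing Bessel's
  inequality for the standard basis vectors of B counts each vector exactly once.\<close>
lemma orthogonal_family_card_le:
  assumes fB: "finite B" and fV: "finite V"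
    and orth: "\<forall>v\<in>V. \<forall>w\<in>V. v \<noteq> w \<longrightarrow> dot_on B v w = 0"
    and pos: "\<forall>v\<in>V. 0 < dot_on B v v"
  shows "card V \<le> card B"
proof -
  have per_coord: "(\<Sum>v\<in>V. (v j)\<^sup>2 / dot_on B v v) \<le> 1" if "j \<in> B" for j
  proof -
    have "dot_on B (unit_vec j) v = v j" for v by (rule dot_on_unit_vec[OF fB that])
    moreover have "unit_vec j j = 1" by (simp add: unit_vec_def)
    ultimately show ?thesis
      using bessel_inequality[OF fB fV orth pos, of "unit_vec j"] dot_on_unit_vec[OF fB that] by simp
  qed
  have "real (card V) = (\<Sum>v\<in>V. dot_on B v v / dot_on B v v)"
    using pos by (simp add: order_less_imp_not_eq2)
  also have "\<dots> = (\<Sum>j\<in>B. \<Sum>v\<in>V. (v j)\<^sup>2 / dot_on B v v)"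
    by (subst sum.swap) (simp only: dot_on_def power2_eq_square sum_divide_distrib)
  also have "\<dots> \<le> real (card B)"
    using sum_mono[of B _ "\<lambda>_. 1", OF per_coord] by simp
  finally show ?thesis by simp
qed

lemma eigvec_quad_on:
  assumes "\<forall>j\<in>B. (\<Sum>k\<in>B. A j k * v k) = e * v j"
  shows "quad_on A B v = e * dot_on B v v"
  unfolding quad_on_def dot_on_def using assms by (simp add: sum_distrib_left mult_ac)

text \<open>A symmetric matrix has only finitely many eigenvalues: eigenvectors for distinct
  eigenvalues are orthogonal, so at most card B of them exist.\<close>
lemma eigenvalues_finite:
  assumes fB: "finite B" and sym: "symmetric_on B A"
  shows "finite {e. is_eig A B e}"
proof (rule ccontr)
  assume "infinite {e. is_eig A B e}"
  then obtain F where F: "finite F" "card F = Suc (card B)" "F \<subseteq> {e. is_eig A B e}"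
    using infinite_arbitrarily_large by blast
  define eigvec where "eigvec v e \<longleftrightarrow> (\<exists>j\<in>B. v j \<noteq> 0) \<and>
      (\<forall>j\<in>B. (\<Sum>k\<in>B. A j k * v k) = e * v j)" for v e
  define vec where "vec e = (SOME v. eigvec v e)" for e
  have vec: "eigvec (vec e) e" if "e \<in> F" for e
  proof -
    have "\<exists>v. eigvec v e" using F(3) that unfolding eigvec_def is_eig_def by blast
    thus ?thesis unfolding vec_def by (rule someI_ex)
  qed
  have orth: "dot_on B (vec e) (vec e') = 0" if "e \<in> F" "e' \<in> F" "e \<noteq> e'" for e e'
  proof -
    let ?v = "vec e" and ?w = "vec e'"
    have "e * dot_on B ?v ?w = (\<Sum>j\<in>B. ?w j * (\<Sum>k\<in>B. A j k * ?v k))"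
      using vec[OF that(1)] unfolding dot_on_def eigvec_def by (simp add: sum_distrib_left mult_ac)
    also have "\<dots> = (\<Sum>k\<in>B. ?v k * (\<Sum>j\<in>B. A k j * ?w j))" by (rule bilinear_swap[OF sym])
    also have "\<dots> = e' * dot_on B ?v ?w"
      using vec[OF that(2)] unfolding dot_on_def eigvec_def by (simp add: sum_distrib_left mult_ac)
    finally have "(e - e') * dot_on B ?v ?w = 0" by (simp add: algebra_simps)
    thus ?thesis using that(3) by simp
  qed
  have inj: "inj_on vec F"
  proof (rule inj_onI)
    fix e e' assume e: "e \<in> F" "e' \<in> F" "vec e = vec e'"
    obtain j where j: "j \<in> B" "vec e j \<noteq> 0" using vec[OF e(1)] unfolding eigvec_def by blast
    have "e * vec e j = e' * vec e j"
      using vec[OF e(1)] vec[OF e(2)] j(1) e(3) unfolding eigvec_def by metis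
    thus "e = e'" using j(2) by simp
  qed
  have "card (vec ` F) \<le> card B"
    using F(1) orth inj vec dot_on_pos[OF fB] unfolding eigvec_def
    by (intro orthogonal_family_card_le[OF fB]) (auto simp: inj_on_def)
  thus False using card_image[OF inj] F(2) by simp
qed

text \<open>Only the entries indexed by B matter; zero_outside B x is the canonical representative.\<close>
definition zero_outside :: "nat set \<Rightarrow> (nat \<Rightarrow> real) \<Rightarrow> nat \<Rightarrow> real" where
  "zero_outside B x = (\<lambda>j. if j \<in> B then x j else 0)"

lemma quad_on_zero_outside:
  assumes "finite P" "B \<subseteq> P"
  shows "quad_on A P (zero_outside B x) = quad_on A B x"
proof -
  have inner: "(\<Sum>k\<in>P. A j k * zero_outside B x k) = (\<Sum>k\<in>B. A j k * x k)" for j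
    by (subst sum.mono_neutral_right[OF assms(1,2)]) (auto simp: zero_outside_def)
  have "quad_on A P (zero_outside B x) = (\<Sum>j\<in>B. zero_outside B x j * (\<Sum>k\<in>B. A j k * x k))"
    unfolding quad_on_def inner
    by (rule sum.mono_neutral_right[OF assms]) (auto simp: zero_outside_def)
  thus ?thesis unfolding quad_on_def zero_outside_def by simp
qed

lemma dot_on_zero_outside:
  assumes "finite P" "B \<subseteq> P"
  shows "dot_on P (zero_outside B x) (zero_outside B x) = dot_on B x x"
proof -
  have "dot_on P (zero_outside B x) (zero_outside B x) = (\<Sum>j\<in>B. zero_outside B x j * zero_outside B x j)"
    unfolding dot_on_def by (rule sum.mono_neutral_right[OF assms]) (auto simp: zero_outside_def)
  thus ?thesis unfolding dot_on_def zero_outside_def by simp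
qed

lemma continuous_on_coordinate [continuous_intros]: "continuous_on S (\<lambda>x::nat\<Rightarrow>real. x i)"
  by (rule continuous_on_subset[OF continuous_on_product_coordinates]) simp

text \<open>By compactness of the unit sphere of the coordinates in B, the quadratic form attains
  its minimum there; that minimum is the best constant in the Rayleigh inequality.\<close>
lemma quad_on_min_on_sphere:
  assumes fB: "finite B" and ne: "B \<noteq> {}"
  shows "\<exists>v. (\<forall>j. j \<notin> B \<longrightarrow> v j = 0) \<and> dot_on B v v = 1 \<and>
             (\<forall>x. quad_on A B v * dot_on B x x \<le> quad_on A B x)"
proof -
  define box where "box = PiE UNIV (\<lambda>i. if i \<in> B then {-1..1::real} else {0})"
  define sphere where "sphere = box \<inter> {x. dot_on B x x = 1}"
  have "compactin (product_topology (\<lambda>i. euclidean) UNIV) box"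
    unfolding box_def compactin_PiE by auto
  moreover have "closed {x. dot_on B x x = 1}"
    unfolding dot_on_def by (intro closed_Collect_eq continuous_intros)
  ultimately have compact: "compact sphere"
    unfolding sphere_def by (simp add: euclidean_product_topology compact_Int_closed)
  have in_sphere: "zero_outside B x \<in> sphere" if "dot_on B x x = 1" for x
  proof -
    have "\<bar>x i\<bar> \<le> 1" if "i \<in> B" for i
      using coord_sq_le_dot_on[OF fB that, of x] \<open>dot_on B x x = 1\<close> by (simp add: abs_square_le_1)
    hence "zero_outside B x \<in> box" unfolding box_def zero_outside_def by (auto simp: abs_le_iff)
    moreover have "dot_on B (zero_outside B x) (zero_outside B x) = 1"
      using dot_on_zero_outside[OF fB, of B x] that by simp
    ultimately show ?thesis unfolding sphere_def by simp
  qed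
  obtain b where "b \<in> B" using ne by blast
  hence "sphere \<noteq> {}" using in_sphere[of "unit_vec b"] dot_on_unit_vec[OF fB] by (auto simp: unit_vec_def)
  moreover have "continuous_on sphere (quad_on A B)"
    unfolding quad_on_def by (intro continuous_intros)
  ultimately obtain v where v: "v \<in> sphere" and vmin: "\<forall>y\<in>sphere. quad_on A B v \<le> quad_on A B y"
    using continuous_attains_inf[OF compact] by blast
  have v_supp: "\<forall>j. j \<notin> B \<longrightarrow> v j = 0"
  proof (intro allI impI)
    fix j assume "j \<notin> B"
    thus "v j = 0" using v unfolding sphere_def box_def by (auto simp: PiE_iff dest: spec[of _ j])
  qed
  have rayleigh: "quad_on A B v * dot_on B x x \<le> quad_on A B x" for x
  proof (cases "dot_on B x x = 0")
    case True
    thus ?thesis using dot_on_eq_0_imp[OF fB True] by (simp add: quad_on_def)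
  next
    case False
    define d where "d = dot_on B x x"
    have d: "0 < d" using False dot_on_nonneg[of B x] unfolding d_def by simp
    define y where "y i = x i / sqrt d" for i
    have "dot_on B y y = d / d" and quad_y: "quad_on A B y = quad_on A B x / d"
      using d unfolding y_def d_def dot_on_def quad_on_def
      by (simp_all add: sum_divide_distrib[symmetric] sum_distrib_left[symmetric]
          real_sqrt_mult[symmetric] mult_ac)
    hence "dot_on B y y = 1" using d by simp
    hence "quad_on A B v \<le> quad_on A B (zero_outside B y)" using vmin in_sphere by blast
    hence "quad_on A B v \<le> quad_on A B y" using quad_on_zero_outside[OF fB, of B A y] by simp
    thus ?thesis using d unfolding quad_y d_def by (simp add: pos_le_divide_eq)
  qed
  show ?thesis using v v_supp rayleigh unfolding sphere_def by blast
qed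

lemma linear_le_quadratic_imp_zero:
  fixes a b :: real
  assumes "\<forall>t. 0 \<le> a * t + b * t\<^sup>2"
  shows "a = 0"
proof (rule ccontr)
  assume a: "a \<noteq> 0"
  define D where "D = \<bar>b\<bar> + 1"
  define t where "t = - a / (2 * D)"
  have D: "0 < D" "b \<le> D" unfolding D_def by auto
  have "b * t\<^sup>2 \<le> D * t\<^sup>2" using D(2) by (simp add: mult_right_mono)
  also have "D * t\<^sup>2 = a\<^sup>2 / (4 * D)" using D(1) unfolding t_def by (simp add: power2_eq_square field_simps)
  finally have "a * t + b * t\<^sup>2 \<le> - (a\<^sup>2 / (4 * D))"
    using D(1) unfolding t_def by (simp add: power2_eq_square field_simps)
  moreover have "0 < a\<^sup>2 / (4 * D)" using a D(1) by simp
  ultimately have "a * t + b * t\<^sup>2 < 0" by linarith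
  thus False using assms by (meson not_le)
qed

text \<open>A vector attaining the Rayleigh bound is an eigenvector: the residual r of
  A v = mu v satisfies 0 <= 2 t |r|^2 + O(t^2) along the line v + t r.\<close>
lemma rayleigh_minimizer_eigvec:
  assumes fB: "finite B" and sym: "symmetric_on B A"
    and bound: "\<forall>x. \<mu> * dot_on B x x \<le> quad_on A B x"
    and attained: "quad_on A B v = \<mu> * dot_on B v v"
  shows "\<forall>j\<in>B. (\<Sum>k\<in>B. A j k * v k) = \<mu> * v j"
proof -
  define r where "r j = (\<Sum>k\<in>B. A j k * v k) - \<mu> * v j" for j
  have "\<forall>t. 0 \<le> (2 * dot_on B r r) * t + (quad_on A B r - \<mu> * dot_on B r r) * t\<^sup>2"
  proof
    fix t
    have "(\<Sum>j\<in>B. r j * (\<Sum>k\<in>B. A j k * v k)) - \<mu> * dot_on B v r = dot_on B r r"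
      unfolding dot_on_def r_def by (simp add: sum_distrib_left sum_subtractf[symmetric] algebra_simps)
    moreover have "0 \<le> quad_on A B (\<lambda>i. v i + t * r i) - \<mu> * dot_on B (\<lambda>i. v i + t * r i) (\<lambda>i. v i + t * r i)"
      using bound by (simp add: algebra_simps)
    ultimately show "0 \<le> (2 * dot_on B r r) * t + (quad_on A B r - \<mu> * dot_on B r r) * t\<^sup>2"
      unfolding quad_on_line[OF sym] dot_on_line attained by (simp add: algebra_simps)
  qed
  hence "dot_on B r r = 0" using linear_le_quadratic_imp_zero by fastforce
  thus ?thesis using dot_on_eq_0_imp[OF fB] unfolding r_def by fastforce
qed

lemma rayleigh_bound_le_eig:
  assumes "finite B" "is_eig A B e" "\<forall>x. l * dot_on B x x \<le> quad_on A B x"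
  shows "l \<le> e"
proof -
  obtain v where v: "\<exists>j\<in>B. v j \<noteq> 0" "\<forall>j\<in>B. (\<Sum>k\<in>B. A j k * v k) = e * v j"
    using assms(2) unfolding is_eig_def by blast
  have "l * dot_on B v v \<le> e * dot_on B v v" using assms(3) eigvec_quad_on[OF v(2)] by metis
  thus ?thesis using dot_on_pos[OF assms(1) v(1)] by simp
qed

lemma phi_min_spec:
  assumes fB: "finite B" and ne: "B \<noteq> {}" and sym: "symmetric_on B A"
  shows "is_eig A B (phi_min A B)" and "\<forall>x. phi_min A B * dot_on B x x \<le> quad_on A B x"
proof -
  obtain v where v: "\<forall>j. j \<notin> B \<longrightarrow> v j = 0" "dot_on B v v = 1"
    and bound: "\<forall>x. quad_on A B v * dot_on B x x \<le> quad_on A B x"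
    using quad_on_min_on_sphere[OF fB ne] by blast
  define \<mu> where "\<mu> = quad_on A B v"
  have "\<exists>j\<in>B. v j \<noteq> 0"
  proof (rule ccontr)
    assume "\<not> (\<exists>j\<in>B. v j \<noteq> 0)"
    hence "dot_on B v v = 0" unfolding dot_on_def by simp
    thus False using v(2) by simp
  qed
  moreover have "\<forall>j\<in>B. (\<Sum>k\<in>B. A j k * v k) = \<mu> * v j"
    using rayleigh_minimizer_eigvec[OF fB sym] bound v(2) unfolding \<mu>_def by simp
  ultimately have eig: "is_eig A B \<mu>" unfolding is_eig_def using v(1) by blast
  have "phi_min A B = \<mu>" unfolding phi_min_def
  proof (rule Min_eqI)
    show "finite {e. is_eig A B e}" by (rule eigenvalues_finite[OF fB sym])
    show "\<mu> \<le> e" if "e \<in> {e. is_eig A B e}" for e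
      using that rayleigh_bound_le_eig[OF fB _ bound[folded \<mu>_def]] by blast
  qed (use eig in simp)
  thus "is_eig A B (phi_min A B)" "\<forall>x. phi_min A B * dot_on B x x \<le> quad_on A B x"
    using eig bound unfolding \<mu>_def by simp_all
qed

lemma phi_min_greatest:
  assumes "finite B" "B \<noteq> {}" "symmetric_on B A" "\<forall>x. l * dot_on B x x \<le> quad_on A B x"
  shows "l \<le> phi_min A B"
  using rayleigh_bound_le_eig[OF assms(1) phi_min_spec(1)[OF assms(1-3)] assms(4)] .

text \<open>The dual statements for phi_max follow by applying the above to -A.\<close>
lemma phi_max_eq_neg_phi_min:
  assumes fB: "finite B" and ne: "B \<noteq> {}" and sym: "symmetric_on B A"
  shows "phi_max A B = - phi_min (\<lambda>j k. - A j k) B"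
proof -
  have eig_neg: "is_eig (\<lambda>j k. - A j k) B e \<longleftrightarrow> is_eig A B (- e)" for e
    unfolding is_eig_def by (simp add: sum_negf minus_equation_iff eq_commute[of "- _"])
  have sym': "symmetric_on B (\<lambda>j k. - A j k)" using sym by (simp add: symmetric_on_def)
  have "{e. is_eig A B e} = uminus ` {e. is_eig (\<lambda>j k. - A j k) B e}"
  proof (intro equalityI subsetI)
    fix e assume "e \<in> {e. is_eig A B e}"
    hence "- e \<in> {e. is_eig (\<lambda>j k. - A j k) B e}" using eig_neg[of "- e"] by simp
    thus "e \<in> uminus ` {e. is_eig (\<lambda>j k. - A j k) B e}" by (metis image_eqI minus_minus)
  qed (use eig_neg in auto)
  moreover have "finite {e. is_eig (\<lambda>j k. - A j k) B e}" "{e. is_eig (\<lambda>j k. - A j k) B e} \<noteq> {}"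
    using eigenvalues_finite[OF fB sym'] phi_min_spec(1)[OF fB ne sym'] by auto
  ultimately show ?thesis unfolding phi_max_def phi_min_def by (metis minus_Min_eq_Max)
qed

lemma quad_on_neg: "quad_on (\<lambda>j k. - A j k) B x = - quad_on A B x"
  unfolding quad_on_def by (simp add: sum_negf)

lemma phi_max_rayleigh:
  assumes "finite B" "B \<noteq> {}" "symmetric_on B A"
  shows "quad_on A B x \<le> phi_max A B * dot_on B x x"
proof -
  have "symmetric_on B (\<lambda>j k. - A j k)" using assms(3) by (simp add: symmetric_on_def)
  hence "phi_min (\<lambda>j k. - A j k) B * dot_on B x x \<le> - quad_on A B x"
    using phi_min_spec(2)[OF assms(1,2)] quad_on_neg by metis
  thus ?thesis unfolding phi_max_eq_neg_phi_min[OF assms] by simp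
qed

lemma phi_max_least:
  assumes "finite B" "B \<noteq> {}" "symmetric_on B A" "\<forall>x. quad_on A B x \<le> h * dot_on B x x"
  shows "phi_max A B \<le> h"
proof -
  have sym': "symmetric_on B (\<lambda>j k. - A j k)" using assms(3) by (simp add: symmetric_on_def)
  have "\<forall>x. (- h) * dot_on B x x \<le> quad_on (\<lambda>j k. - A j k) B x"
    using assms(4) by (simp add: quad_on_neg)
  from phi_min_greatest[OF assms(1,2) sym' this] show ?thesis
    unfolding phi_max_eq_neg_phi_min[OF assms(1-3)] by simp
qed

lemma diag_le_phi_max:
  assumes "finite B" "symmetric_on B A" "j \<in> B"
  shows "A j j \<le> phi_max A B"
proof -
  have "quad_on A B (unit_vec j) \<le> phi_max A B * dot_on B (unit_vec j) (unit_vec j)"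
    using phi_max_rayleigh[OF assms(1) _ assms(2)] assms(3) by blast
  thus ?thesis
    using quad_on_unit_vec[OF assms(1,3)] dot_on_unit_vec[OF assms(1,3)] by (simp add: unit_vec_def)
qed

section \<open>Principal submatrices and entrywise perturbations\<close>

lemma phi_min_submatrix:
  assumes fP: "finite P" and B: "B \<noteq> {}" "B \<subseteq> P" and sym: "symmetric_on P A"
  shows "phi_min A P \<le> phi_min A B"
proof -
  have fB: "finite B" using fP B(2) finite_subset by blast
  have "P \<noteq> {}" using B by blast
  have "phi_min A P * dot_on B x x \<le> quad_on A B x" for x
    using phi_min_spec(2)[OF fP \<open>P \<noteq> {}\<close> sym, rule_format, of "zero_outside B x"]
    unfolding dot_on_zero_outside[OF fP B(2)] quad_on_zero_outside[OF fP B(2)] .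
  moreover have "symmetric_on B A" using sym B(2) by (auto simp: symmetric_on_def)
  ultimately show ?thesis using phi_min_greatest[OF fB B(1)] by blast
qed

lemma phi_max_submatrix:
  assumes fP: "finite P" and B: "B \<noteq> {}" "B \<subseteq> P" and sym: "symmetric_on P A"
  shows "phi_max A B \<le> phi_max A P"
proof -
  have fB: "finite B" using fP B(2) finite_subset by blast
  have "P \<noteq> {}" using B by blast
  have "quad_on A B x \<le> phi_max A P * dot_on B x x" for x
    using phi_max_rayleigh[OF fP \<open>P \<noteq> {}\<close> sym, of "zero_outside B x"]
    unfolding dot_on_zero_outside[OF fP B(2)] quad_on_zero_outside[OF fP B(2)] .
  moreover have "symmetric_on B A" using sym B(2) by (auto simp: symmetric_on_def)
  ultimately show ?thesis using phi_max_least[OF fB B(1)] by blast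
qed

lemma quad_on_perturb:
  assumes "\<forall>j\<in>B. \<forall>k\<in>B. \<bar>A j k - A' j k\<bar> \<le> lam"
  shows "\<bar>quad_on A B x - quad_on A' B x\<bar> \<le> lam * (l1_on x B)\<^sup>2"
proof -
  have "quad_on A B x - quad_on A' B x = (\<Sum>j\<in>B. \<Sum>k\<in>B. x j * (A j k - A' j k) * x k)"
    unfolding quad_on_def by (simp add: sum_subtractf[symmetric] sum_distrib_left algebra_simps)
  also have "\<bar>\<dots>\<bar> \<le> (\<Sum>j\<in>B. \<Sum>k\<in>B. \<bar>x j * (A j k - A' j k) * x k\<bar>)"
    by (rule order_trans[OF sum_abs]) (intro sum_mono sum_abs)
  also have "\<dots> \<le> (\<Sum>j\<in>B. \<Sum>k\<in>B. \<bar>x j\<bar> * lam * \<bar>x k\<bar>)"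
    using assms by (intro sum_mono) (auto simp: abs_mult intro!: mult_right_mono mult_left_mono)
  also have "\<dots> = lam * (l1_on x B)\<^sup>2"
    unfolding l1_on_def power2_eq_square by (simp add: sum_product sum_distrib_left mult_ac)
  finally show ?thesis .
qed

lemma quad_on_perturb_dot:
  assumes "finite B" "0 \<le> lam" "\<forall>j\<in>B. \<forall>k\<in>B. \<bar>A j k - A' j k\<bar> \<le> lam"
  shows "\<bar>quad_on A B x - quad_on A' B x\<bar> \<le> lam * real (card B) * dot_on B x x"
  using quad_on_perturb[OF assms(3), of x] mult_left_mono[OF l1_on_sq_le[OF assms(1), of x] assms(2)]
  by (simp add: mult.assoc)

lemma phi_min_perturb:
  assumes fB: "finite B" and ne: "B \<noteq> {}" and sym: "symmetric_on B A" "symmetric_on B A'"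
    and lam: "0 \<le> lam" and close: "\<forall>j\<in>B. \<forall>k\<in>B. \<bar>A j k - A' j k\<bar> \<le> lam"
  shows "phi_min A B - lam * real (card B) \<le> phi_min A' B"
proof (rule phi_min_greatest[OF fB ne sym(2)], intro allI)
  fix x
  have "phi_min A B * dot_on B x x \<le> quad_on A B x" using phi_min_spec(2)[OF fB ne sym(1)] by blast
  thus "(phi_min A B - lam * real (card B)) * dot_on B x x \<le> quad_on A' B x"
    using quad_on_perturb_dot[OF fB lam close, of x] by (simp add: algebra_simps abs_le_iff)
qed

lemma phi_max_perturb:
  assumes fB: "finite B" and ne: "B \<noteq> {}" and sym: "symmetric_on B A" "symmetric_on B A'"
    and lam: "0 \<le> lam" and close: "\<forall>j\<in>B. \<forall>k\<in>B. \<bar>A j k - A' j k\<bar> \<le> lam"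
  shows "phi_max A' B \<le> phi_max A B + lam * real (card B)"
proof (rule phi_max_least[OF fB ne sym(2)], intro allI)
  fix x
  have "quad_on A B x \<le> phi_max A B * dot_on B x x" using phi_max_rayleigh[OF fB ne sym(1)] .
  thus "quad_on A' B x \<le> (phi_max A B + lam * real (card B)) * dot_on B x x"
    using quad_on_perturb_dot[OF fB lam close, of x] by (simp add: algebra_simps abs_le_iff)
qed

section \<open>The Gram matrix and its thresholded version\<close>

lemma gram_symmetric: "symmetric_on B (gram n X)"
  unfolding symmetric_on_def gram_def by (simp add: mult.commute)

lemma sigma_hat_symmetric: "symmetric_on B (sigma_hat n X lam)"
  using gram_symmetric unfolding symmetric_on_def sigma_hat_def by metis

lemma gram_sigma_hat_close: "0 \<le> lam \<Longrightarrow> \<bar>gram n X j k - sigma_hat n X lam j k\<bar> \<le> lam"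
  unfolding sigma_hat_def by auto

lemma gram_diag: "0 < n \<Longrightarrow> (\<Sum>i<n. (X i j)\<^sup>2) = real n \<Longrightarrow> gram n X j j = 1"
  unfolding gram_def by (simp add: power2_eq_square)

lemma norm_Xu_sq:
  assumes "0 < n"
  shows "(norm_Xu n p X u)\<^sup>2 = real n * quad_on (gram n X) {0..<p} u"
proof -
  have "(norm_Xu n p X u)\<^sup>2 = (\<Sum>i<n. (\<Sum>j<p. X i j * u j)\<^sup>2)"
    unfolding norm_Xu_def by (simp add: sum_nonneg)
  also have "\<dots> = (\<Sum>j<p. \<Sum>k<p. \<Sum>i<n. u j * (X i j * X i k) * u k)"
    by (simp add: power2_eq_square sum_product mult_ac sum.swap[of _ "{..<n}"])
  also have "\<dots> = real n * quad_on (gram n X) {0..<p} u"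
  proof -
    have "quad_on (gram n X) {0..<p} u = (\<Sum>j<p. \<Sum>k<p. \<Sum>i<n. u j * (X i j * X i k) * u k) / real n"
      unfolding quad_on_def gram_def atLeast0LessThan
      by (simp add: sum_distrib_left sum_distrib_right sum_divide_distrib mult_ac)
    thus ?thesis using assms by simp
  qed
  finally show ?thesis .
qed

lemma gram_phi_min_lower:
  assumes lam: "0 \<le> lam" and B: "B \<noteq> {}" "B \<subseteq> {0..<p}"
  shows "phi_min (sigma_hat n X lam) {0..<p} - lam * real (card B) \<le> phi_min (gram n X) B"
proof -
  have fB: "finite B" using B(2) finite_subset by blast
  have "phi_min (sigma_hat n X lam) {0..<p} \<le> phi_min (sigma_hat n X lam) B"
    using phi_min_submatrix[OF _ B sigma_hat_symmetric] by simp
  moreover have "phi_min (sigma_hat n X lam) B - lam * real (card B) \<le> phi_min (gram n X) B"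
    using gram_sigma_hat_close[OF lam]
    by (intro phi_min_perturb[OF fB B(1) sigma_hat_symmetric gram_symmetric lam])
      (simp add: abs_minus_commute)
  ultimately show ?thesis by linarith
qed

lemma gram_phi_max_upper:
  assumes lam: "0 \<le> lam" and B: "B \<noteq> {}" "B \<subseteq> {0..<p}"
  shows "phi_max (gram n X) B \<le> phi_max (sigma_hat n X lam) {0..<p} + lam * real (card B)"
proof -
  have fB: "finite B" using B(2) finite_subset by blast
  have "phi_max (sigma_hat n X lam) B \<le> phi_max (sigma_hat n X lam) {0..<p}"
    using phi_max_submatrix[OF _ B sigma_hat_symmetric] by simp
  moreover have "phi_max (gram n X) B \<le> phi_max (sigma_hat n X lam) B + lam * real (card B)"
    using gram_sigma_hat_close[OF lam]
    by (intro phi_max_perturb[OF fB B(1) sigma_hat_symmetric gram_symmetric lam])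
      (simp add: abs_minus_commute)
  ultimately show ?thesis by linarith
qed

section \<open>Sparse eigenvalues\<close>

text \<open>Every B with S <= B and |B - S| <= m has at most |S| + m elements, so the lower
  sparse eigenvalue inherits the bound of gram_phi_min_lower uniformly.\<close>
lemma phi_minus_lower:
  assumes lam: "0 \<le> lam" and S: "S \<noteq> {}" "S \<subseteq> {0..<p}"
  shows "phi_min (sigma_hat n X lam) {0..<p} - lam * (real (card S) + real m) \<le> phi_minus n p X m S"
proof -
  define I where "I = {B. S \<subseteq> B \<and> B \<subseteq> {0..<p} \<and> card (B - S) \<le> m}"
  have each: "phi_min (sigma_hat n X lam) {0..<p} - lam * (real (card S) + real m) \<le> phi_min (gram n X) B"
    if "B \<in> I" for B
  proof -
    have B: "S \<subseteq> B" "B \<subseteq> {0..<p}" "card (B - S) \<le> m" using that unfolding I_def by auto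
    have "finite B" using B(2) finite_subset by blast
    hence "card B = card S + card (B - S)"
      using B(1) card_mono[of B S] card_Diff_subset[of S B] finite_subset[OF B(1)] by linarith
    hence "lam * real (card B) \<le> lam * (real (card S) + real m)"
      using B(3) lam by (intro mult_left_mono) auto
    moreover have "B \<noteq> {}" using B(1) S(1) by blast
    ultimately show ?thesis using gram_phi_min_lower[OF lam _ B(2), of n X] by linarith
  qed
  have fI: "finite I" unfolding I_def by (rule finite_subset[of _ "Pow {0..<p}"]) auto
  have SI: "S \<in> I" unfolding I_def using S by auto
  have eq: "{phi_min (gram n X) B | B. S \<subseteq> B \<and> B \<subseteq> {0..<p} \<and> card (B - S) \<le> m}
      = (\<lambda>B. phi_min (gram n X) B) ` I"
    unfolding I_def by blast
  show ?thesis unfolding phi_minus_def eq using fI SI each by (subst Min_ge_iff) blast+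
qed

text \<open>With unit-norm columns every diagonal Gram entry is 1, so phi_plus is at least 1.\<close>
lemma phi_plus_bounds:
  assumes n: "0 < n" and cols: "\<forall>j<p. (\<Sum>i<n. (X i j)\<^sup>2) = real n" and lam: "0 \<le> lam"
    and S: "S \<subseteq> {0..<p}" "S \<noteq> {0..<p}" and m: "1 \<le> m"
  shows "1 \<le> phi_plus n p X m S"
    and "phi_plus n p X m S \<le> phi_max (sigma_hat n X lam) {0..<p} + lam * real m"
proof -
  define I where "I = {B. B \<noteq> {} \<and> B \<subseteq> {0..<p} \<and> B \<inter> S = {} \<and> card B \<le> m}"
  have upper: "phi_max (gram n X) B \<le> phi_max (sigma_hat n X lam) {0..<p} + lam * real m"
    if "B \<in> I" for B
  proof -
    have B: "B \<noteq> {}" "B \<subseteq> {0..<p}" "card B \<le> m" using that unfolding I_def by auto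
    have "lam * real (card B) \<le> lam * real m" using B(3) lam by (simp add: mult_left_mono)
    thus ?thesis using gram_phi_max_upper[OF lam B(1,2), of n X] by linarith
  qed
  have fI: "finite I" unfolding I_def by (rule finite_subset[of _ "Pow {0..<p}"]) auto
  obtain j where j: "j < p" "j \<notin> S" using S by (metis atLeastLessThan_iff subsetI subset_antisym zero_le)
  hence jI: "{j} \<in> I" unfolding I_def using m by auto
  have eq: "{phi_max (gram n X) B | B. B \<noteq> {} \<and> B \<subseteq> {0..<p} \<and> B \<inter> S = {} \<and> card B \<le> m}
      = (\<lambda>B. phi_max (gram n X) B) ` I"
    unfolding I_def by blast
  have "gram n X j j = 1" using gram_diag[OF n] cols j(1) by blast
  hence "1 \<le> phi_max (gram n X) {j}" using diag_le_phi_max[OF _ gram_symmetric, of "{j}" j n X] by simp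
  also have "\<dots> \<le> phi_plus n p X m S"
    unfolding phi_plus_def eq using fI jI by (intro Max_ge) auto
  finally show "1 \<le> phi_plus n p X m S" .
  show "phi_plus n p X m S \<le> phi_max (sigma_hat n X lam) {0..<p} + lam * real m"
    unfolding phi_plus_def eq using fI jI upper by (subst Max_le_iff) blast+
qed

section \<open>The compatibility factor\<close>

lemma cone_l1_on_pos:
  assumes u: "u \<in> cone p \<xi> S" "u \<noteq> (\<lambda>_. 0)" and S: "S \<subseteq> {0..<p}"
  shows "0 < l1_on u S"
proof (rule ccontr)
  assume "\<not> 0 < l1_on u S"
  hence zero_S: "l1_on u S = 0" using l1_on_nonneg[of u S] by simp
  hence "l1_on u ({0..<p} - S) = 0" using u(1) l1_on_nonneg[of u "{0..<p} - S"] by (simp add: cone_def)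
  hence "l1_on u {0..<p} = 0" using l1_on_split[of "{0..<p}" S u] S zero_S by simp
  hence "\<forall>j\<in>{0..<p}. u j = 0" unfolding l1_on_def by (simp add: sum_nonneg_eq_0_iff)
  moreover have "\<forall>j. p \<le> j \<longrightarrow> u j = 0" using u(1) by (simp add: cone_def)
  ultimately have "u = (\<lambda>_. 0)" by (intro ext) (metis atLeastLessThan_iff not_le zero_le)
  thus False using u(2) by simp
qed

text \<open>A uniform lower bound kappa0^2 |u_S|_1^2 <= |S| u'Gu on the cone bounds the
  compatibility factor from below; the infimum is over a nonempty set (it contains e_j, j in S).\<close>
lemma compat_lower_bound:
  assumes n: "0 < n" and S: "S \<noteq> {}" "S \<subseteq> {0..<p}" and \<xi>: "0 \<le> \<xi>" and \<kappa>0: "0 \<le> \<kappa>0"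
    and bound: "\<forall>u. u \<in> cone p \<xi> S \<and> u \<noteq> (\<lambda>_. 0) \<longrightarrow>
                  \<kappa>0\<^sup>2 * (l1_on u S)\<^sup>2 \<le> real (card S) * quad_on (gram n X) {0..<p} u"
  shows "\<kappa>0 \<le> compat n p X \<xi> S"
proof -
  define ratio where "ratio u = norm_Xu n p X u * sqrt (real (card S)) / (sqrt (real n) * l1_on u S)" for u
  have each: "\<kappa>0 \<le> ratio u" if u: "u \<in> cone p \<xi> S" "u \<noteq> (\<lambda>_. 0)" for u
  proof -
    define L where "L = l1_on u S"
    have L: "0 < L" unfolding L_def by (rule cone_l1_on_pos[OF u S(2)])
    have "(ratio u)\<^sup>2 = real (card S) * quad_on (gram n X) {0..<p} u / L\<^sup>2"
      using n unfolding ratio_def L_def[symmetric]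
      by (simp add: power_mult_distrib power_divide norm_Xu_sq)
    hence "\<kappa>0\<^sup>2 \<le> (ratio u)\<^sup>2" using bound u L unfolding L_def by (simp add: pos_le_divide_eq)
    moreover have "0 \<le> ratio u" unfolding ratio_def norm_Xu_def using L[unfolded L_def] n
      by (intro divide_nonneg_pos mult_nonneg_nonneg) (auto simp: sum_nonneg)
    ultimately show ?thesis using power2_le_imp_le by blast
  qed
  obtain b where b: "b \<in> S" using S(1) by blast
  have "finite S" using S(2) finite_subset by blast
  hence "l1_on (unit_vec b) S = 1" and "l1_on (unit_vec b) ({0..<p} - S) = 0"
    using b unfolding l1_on_def unit_vec_def by (simp_all add: if_distrib cong: if_cong)
  moreover have "\<forall>j. p \<le> j \<longrightarrow> unit_vec b j = 0" using b S(2) by (auto simp: unit_vec_def)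
  ultimately have "unit_vec b \<in> cone p \<xi> S" "unit_vec b \<noteq> (\<lambda>_. 0)"
    using \<xi> by (auto simp: cone_def unit_vec_def dest: fun_cong[of _ _ b])
  hence "{ratio u | u. u \<in> cone p \<xi> S \<and> u \<noteq> (\<lambda>_. 0)} \<noteq> {}" by blast
  hence "\<kappa>0 \<le> Inf {ratio u | u. u \<in> cone p \<xi> S \<and> u \<noteq> (\<lambda>_. 0)}"
    using each by (intro cInf_greatest) auto
  thus ?thesis unfolding compat_def ratio_def .
qed

text \<open>Restricted eigenvalue bound: on the cone, |u|_1 <= (1 + xi) |u_S|_1, so the
  thresholding error lam |u|_1^2 is absorbed by half of the eigenvalue bound c.\<close>
lemma compat_sq_lower:
  assumes n: "0 < n" and lam: "0 \<le> lam" and \<xi>: "0 \<le> \<xi>" and c: "0 \<le> c"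
    and hmin: "c \<le> phi_min (sigma_hat n X lam) {0..<p}"
    and small: "real (card S) * lam * (1 + \<xi>)\<^sup>2 \<le> c / 2"
    and S: "S \<noteq> {}" "S \<subseteq> {0..<p}"
  shows "c / 2 \<le> (compat n p X \<xi> S)\<^sup>2"
proof -
  let ?P = "{0..<p}" and ?G = "gram n X" and ?H = "sigma_hat n X lam"
  have fS: "finite S" using S(2) finite_subset by blast
  have "p \<noteq> 0" using S by auto
  have "(c / 2) * (l1_on u S)\<^sup>2 \<le> real (card S) * quad_on ?G ?P u" if u: "u \<in> cone p \<xi> S" for u
  proof -
    define L where "L = l1_on u S"
    have l1_P: "l1_on u ?P \<le> (1 + \<xi>) * L"
      using l1_on_split[of ?P S u] S(2) u unfolding L_def cone_def by (simp add: algebra_simps)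
    have "L\<^sup>2 \<le> real (card S) * dot_on S u u" unfolding L_def by (rule l1_on_sq_le[OF fS])
    also have "\<dots> \<le> real (card S) * dot_on ?P u u"
      using S(2) unfolding dot_on_def by (intro mult_left_mono sum_mono2) auto
    finally have L_sq: "c * L\<^sup>2 \<le> real (card S) * (c * dot_on ?P u u)"
      using mult_left_mono[OF _ c] by (metis mult.left_commute)
    have "c * dot_on ?P u u \<le> phi_min ?H ?P * dot_on ?P u u"
      using hmin dot_on_nonneg by (rule mult_right_mono)
    also have "\<dots> \<le> quad_on ?H ?P u"
      using phi_min_spec(2)[OF _ _ sigma_hat_symmetric, of ?P] \<open>p \<noteq> 0\<close> by simp
    also have "\<dots> \<le> quad_on ?G ?P u + lam * (l1_on u ?P)\<^sup>2"
      using quad_on_perturb[of ?P ?G ?H lam u] gram_sigma_hat_close[OF lam] by (simp add: abs_le_iff)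
    also have "\<dots> \<le> quad_on ?G ?P u + lam * ((1 + \<xi>)\<^sup>2 * L\<^sup>2)"
      using power_mono[OF l1_P l1_on_nonneg] lam by (simp add: power_mult_distrib mult_left_mono)
    finally have "real (card S) * (c * dot_on ?P u u)
        \<le> real (card S) * (quad_on ?G ?P u + lam * ((1 + \<xi>)\<^sup>2 * L\<^sup>2))"
      by (rule mult_left_mono) simp
    also have "\<dots> = real (card S) * quad_on ?G ?P u + (real (card S) * lam * (1 + \<xi>)\<^sup>2) * L\<^sup>2"
      by (simp add: algebra_simps)
    also have "(real (card S) * lam * (1 + \<xi>)\<^sup>2) * L\<^sup>2 \<le> (c / 2) * L\<^sup>2"
      using mult_right_mono[OF small, of "L\<^sup>2"] by simp
    finally show ?thesis using L_sq unfolding L_def by linarith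
  qed
  hence "sqrt (c / 2) \<le> compat n p X \<xi> S"
    using c by (intro compat_lower_bound[OF n S \<xi>]) auto
  from power_mono[OF this, of 2] show ?thesis using c by simp
qed

text \<open>Size bookkeeping: with |S| <= s and m - 1 < K |S|, both |S| + m and m are at most
  s (1 + K) + 1, which is what the hypothesis on lam1 controls.\<close>
lemma sparsity_budget:
  fixes lam s K a m :: real
  assumes "0 \<le> lam" "0 \<le> s" "0 \<le> K" "a \<le> s" "m - 1 < K * a"
  shows "lam * (a + m) \<le> s * lam * (1 + K) + lam" and "lam * m \<le> s * lam * (1 + K) + lam"
proof -
  have "m \<le> K * s + 1" using assms(3-5) mult_left_mono[of a s K] by linarith
  hence "lam * m \<le> lam * (K * s + 1)" using assms(1) by (rule mult_left_mono)
  moreover have "lam * a \<le> lam * s" using assms(1,4) by (simp add: mult_left_mono)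
  moreover have "0 \<le> lam * s" using assms(1,2) by simp
  ultimately show "lam * (a + m) \<le> s * lam * (1 + K) + lam" "lam * m \<le> s * lam * (1 + K) + lam"
    by (simp_all add: algebra_simps)
qed

lemma xi_sq_over_compat_le:
  fixes \<xi> c_low c_up \<kappa> \<phi> :: real
  assumes "0 < c_low" "0 < c_up" "c_low / 2 \<le> \<kappa>\<^sup>2" "0 < \<phi>" "\<phi> \<le> c_up + c_low / 2"
  shows "\<xi>\<^sup>2 / \<kappa>\<^sup>2 \<le> 2 * \<xi>\<^sup>2 * (c_up / c_low + 1 / 2) / \<phi>"
proof -
  have "\<xi>\<^sup>2 / \<kappa>\<^sup>2 \<le> \<xi>\<^sup>2 / (c_low / 2)"
    using assms(1,3) by (intro divide_left_mono) (auto intro!: mult_pos_pos)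
  also have "\<dots> = 2 * \<xi>\<^sup>2 * ((c_up + c_low / 2) / c_low) / (c_up + c_low / 2)"
    using assms(1,2) by simp
  also have "\<dots> = 2 * \<xi>\<^sup>2 * (c_up / c_low + 1 / 2) / (c_up + c_low / 2)"
    using assms(1) by (simp add: add_divide_distrib)
  also have "\<dots> \<le> 2 * \<xi>\<^sup>2 * (c_up / c_low + 1 / 2) / \<phi>"
    using assms(1,2,4,5) by (intro divide_left_mono) auto
  finally show ?thesis .
qed

theorem proposition2:
  fixes n p :: nat and X :: "nat \<Rightarrow> nat \<Rightarrow> real"
    and s \<xi> M0 c_low c_up :: real
  assumes "0 < n" and "0 < p"
    and cols: "\<forall>j<p. (\<Sum>i<n. (X i j)\<^sup>2) = real n"
    and "0 < s" and "0 < \<xi>" and "0 < M0" and "0 < c_low" and "0 < c_up"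
  defines "lam1 \<equiv> M0 * sqrt (ln (real p) / real n)"
    and "K \<equiv> 2 * \<xi>\<^sup>2 * (c_up / c_low + 1 / 2)"
  shows
   "(phi_min (sigma_hat n X lam1) {0..<p} \<ge> c_low \<and> s * lam1 * (1 + \<xi>)\<^sup>2 \<le> c_low / 2 \<longrightarrow>
      (\<forall>S. S \<noteq> {} \<and> S \<subseteq> {0..<p} \<and> real (card S) \<le> s \<longrightarrow>
         (compat n p X \<xi> S)\<^sup>2 \<ge> c_low / 2))
    \<and>
    (phi_min (sigma_hat n X lam1) {0..<p} \<ge> c_low \<and> s * lam1 * (1 + \<xi>)\<^sup>2 \<le> c_low / 2 \<and>
     phi_max (sigma_hat n X lam1) {0..<p} \<le> c_up \<and> s * lam1 * (1 + K) + lam1 \<le> c_low / 2 \<longrightarrow>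
      (\<forall>S (m::nat). S \<noteq> {} \<and> S \<subseteq> {0..<p} \<and> real (card S) \<le> s \<and>
          real m - 1 < K * real (card S) \<and> K * real (card S) \<le> real m \<longrightarrow>
         phi_minus n p X m S \<ge> c_low / 2 \<and>
         (compat n p X \<xi> S)\<^sup>2 \<ge> c_low / 2 \<and>
         (S \<noteq> {0..<p} \<longrightarrow> \<xi>\<^sup>2 / (compat n p X \<xi> S)\<^sup>2 \<le> K / phi_plus n p X m S)))"
proof -
  have lam: "0 \<le> lam1" unfolding lam1_def using \<open>0 < M0\<close> \<open>0 < p\<close> by (intro mult_nonneg_nonneg) auto
  have K: "0 < K" unfolding K_def using \<open>0 < \<xi>\<close> \<open>0 < c_low\<close> \<open>0 < c_up\<close>
    by (intro mult_pos_pos) (auto intro: add_pos_pos)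
  have compat: "c_low / 2 \<le> (compat n p X \<xi> S)\<^sup>2"
    if "c_low \<le> phi_min (sigma_hat n X lam1) {0..<p}" "s * lam1 * (1 + \<xi>)\<^sup>2 \<le> c_low / 2"
      and S: "S \<noteq> {}" "S \<subseteq> {0..<p}" "real (card S) \<le> s" for S
  proof -
    have "real (card S) * (lam1 * (1 + \<xi>)\<^sup>2) \<le> s * (lam1 * (1 + \<xi>)\<^sup>2)"
      using S(3) lam by (intro mult_right_mono) auto
    hence "real (card S) * lam1 * (1 + \<xi>)\<^sup>2 \<le> c_low / 2" using that(2) by (simp add: mult_ac)
    thus ?thesis using that(1) \<open>0 < \<xi>\<close> \<open>0 < c_low\<close>
      by (intro compat_sq_lower[OF \<open>0 < n\<close> lam _ _ _ _ S(1,2)]) auto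
  qed
  show ?thesis
  proof (intro conjI impI allI)
    fix S m
    assume H: "c_low \<le> phi_min (sigma_hat n X lam1) {0..<p} \<and> s * lam1 * (1 + \<xi>)\<^sup>2 \<le> c_low / 2 \<and>
      phi_max (sigma_hat n X lam1) {0..<p} \<le> c_up \<and> s * lam1 * (1 + K) + lam1 \<le> c_low / 2"
      and S: "S \<noteq> {} \<and> S \<subseteq> {0..<p} \<and> real (card S) \<le> s \<and>
        real m - 1 < K * real (card S) \<and> K * real (card S) \<le> real m"
    have budget: "lam1 * (real (card S) + real m) \<le> c_low / 2" "lam1 * real m \<le> c_low / 2"
      using sparsity_budget[OF lam _ _ _, of s K "real (card S)" "real m"] H S K \<open>0 < s\<close> by auto
    show "c_low / 2 \<le> phi_minus n p X m S"
      using phi_minus_lower[OF lam, of S p n X m] H S budget(1) by linarith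
    show \<kappa>: "c_low / 2 \<le> (compat n p X \<xi> S)\<^sup>2" using compat H S by blast
    assume "S \<noteq> {0..<p}"
    moreover have "1 \<le> m"
    proof -
      have "0 < card S" using S finite_subset[of S "{0..<p}"] by (simp add: card_gt_0_iff)
      hence "0 < K * real (card S)" using K by simp
      thus ?thesis using S by linarith
    qed
    ultimately have "1 \<le> phi_plus n p X m S" "phi_plus n p X m S \<le> c_up + c_low / 2"
      using phi_plus_bounds[OF \<open>0 < n\<close> cols lam, of S m] H S budget(2) by auto
    thus "\<xi>\<^sup>2 / (compat n p X \<xi> S)\<^sup>2 \<le> K / phi_plus n p X m S"
      unfolding K_def using xi_sq_over_compat_le[OF \<open>0 < c_low\<close> \<open>0 < c_up\<close> \<kappa>] by simp
  qed (use compat in blast)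
qed

end
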